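(* Let $\lambda\in(1/2,1)$ and set $\rho=\lambda\Phi_1+(1-\lambda)|01\rangle\langle01|$ and $\sigma=\lambda\Phi_1+(1-\lambda)\Phi_2$. Then there exists no non-entangling map $\Lambda:\mathcal{D}\to\mathcal{D}$ such that $\Lambda(\rho)=\sigma$.
   Context: $\mathcal{D}$ is the set of two-qubit density matrices on $\mathbb{C}^2\otimes\mathbb{C}^2$ (Hermitian, positive semidefinite, trace one $4\times4$ matrices), written in the computational basis $\{|ij\rangle\}_{i,j\in\{0,1\}}$. The Bell vectors are $|\Phi_1\rangle=\frac{1}{\sqrt2}(|00\rangle+|11\rangle)$, $|\Phi_2\rangle=\frac{1}{\sqrt2}(|00\rangle-|11\rangle)$, and $\Phi_i=|\Phi_i\rangle\langle\Phi_i|$. (These are the states $\rho_{\vec\lambda}=\lambda_1\Phi_1+\lambda_2|01\rangle\langle01|+\lambda_3\Phi_2+\lambda_4|10\rangle\langle10|$ and $\sigma_{\vec\lambda}=\sum_j\lambda_j\Phi_j$, with $|\Phi_3\rangle=\frac{1}{\sqrt2}(|10\rangle+|01\rangle)$, $|\Phi_4\rangle=\frac{1}{\sqrt2}(|10\rangle-|01\rangle)$, for $\vec\lambda=(\lambda,1-\lambda,0,0)$.) A state is separable if it is a convex combination of product states $|\phi\rangle\langle\phi|\otimes|\chi\rangle\langle\chi|$. A map $\Lambda:\mathcal{D}\to\mathcal{D}$ is non-entangling (NE) if it is completely positive and trace preserving and maps every separable state to a separable state. *)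

theory Defs
  imports "Jordan_Normal_Form.Matrix"
begin

text \<open>Two-qubit states are 4x4 complex matrices in the computational basis
  |00>,|01>,|10>,|11>, where |ij> has index 2*i+j.\<close>

definition mtrace :: "complex mat \<Rightarrow> complex" where
  "mtrace A = (\<Sum>i<dim_row A. A $$ (i,i))"

definition psd :: "nat \<Rightarrow> complex mat \<Rightarrow> bool" where
  "psd n A \<longleftrightarrow> A \<in> carrier_mat n n
     \<and> (\<forall>i<n. \<forall>j<n. A $$ (i,j) = cnj (A $$ (j,i)))
     \<and> (\<forall>v \<in> carrier_vec n. 0 \<le> Re (\<Sum>i<n. \<Sum>j<n. cnj (v $ i) * A $$ (i,j) * v $ j))"

definition density4 :: "complex mat \<Rightarrow> bool" where
  "density4 A \<longleftrightarrow> psd 4 A \<and> mtrace A = 1"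

definition outer :: "nat \<Rightarrow> complex vec \<Rightarrow> complex mat" where
  "outer n v = mat n n (\<lambda>(i,j). v $ i * cnj (v $ j))"

definition unit_vec2 :: "complex vec \<Rightarrow> bool" where
  "unit_vec2 v \<longleftrightarrow> v \<in> carrier_vec 2 \<and> (\<Sum>i<2. (cmod (v $ i))^2) = 1"

definition kron22 :: "complex mat \<Rightarrow> complex mat \<Rightarrow> complex mat" where
  "kron22 A B = mat 4 4 (\<lambda>(r,c). A $$ (r div 2, c div 2) * B $$ (r mod 2, c mod 2))"

definition separable :: "complex mat \<Rightarrow> bool" where
  "separable \<rho> \<longleftrightarrow> (\<exists>(n::nat) (p::nat \<Rightarrow> real) \<phi> \<chi>.
      (\<forall>i<n. 0 \<le> p i) \<and> (\<Sum>i<n. p i) = 1 \<and>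
      (\<forall>i<n. unit_vec2 (\<phi> i) \<and> unit_vec2 (\<chi> i)) \<and>
      \<rho> = mat 4 4 (\<lambda>(r,c). \<Sum>i<n. complex_of_real (p i) *
              kron22 (outer 2 (\<phi> i)) (outer 2 (\<chi> i)) $$ (r,c)))"

definition linear_map4 :: "(complex mat \<Rightarrow> complex mat) \<Rightarrow> bool" where
  "linear_map4 \<Lambda> \<longleftrightarrow>
     (\<forall>A \<in> carrier_mat 4 4. \<Lambda> A \<in> carrier_mat 4 4) \<and>
     (\<forall>A \<in> carrier_mat 4 4. \<forall>B \<in> carrier_mat 4 4. \<Lambda> (A + B) = \<Lambda> A + \<Lambda> B) \<and>
     (\<forall>A \<in> carrier_mat 4 4. \<forall>c::complex. \<Lambda> (c \<cdot>\<^sub>m A) = c \<cdot>\<^sub>m \<Lambda> A)"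

definition trace_preserving4 :: "(complex mat \<Rightarrow> complex mat) \<Rightarrow> bool" where
  "trace_preserving4 \<Lambda> \<longleftrightarrow> (\<forall>A \<in> carrier_mat 4 4. mtrace (\<Lambda> A) = mtrace A)"

text \<open>id_k \<otimes> \<Lambda>: apply \<Lambda> to each 4x4 block of a (4k)x(4k) matrix.\<close>
definition ampl :: "nat \<Rightarrow> (complex mat \<Rightarrow> complex mat) \<Rightarrow> complex mat \<Rightarrow> complex mat" where
  "ampl k \<Lambda> X = mat (4*k) (4*k) (\<lambda>(r,c).
      \<Lambda> (mat 4 4 (\<lambda>(i,j). X $$ (4*(r div 4) + i, 4*(c div 4) + j))) $$ (r mod 4, c mod 4))"

definition completely_positive4 :: "(complex mat \<Rightarrow> complex mat) \<Rightarrow> bool" where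
  "completely_positive4 \<Lambda> \<longleftrightarrow> (\<forall>k X. psd (4*k) X \<longrightarrow> psd (4*k) (ampl k \<Lambda> X))"

definition non_entangling :: "(complex mat \<Rightarrow> complex mat) \<Rightarrow> bool" where
  "non_entangling \<Lambda> \<longleftrightarrow> linear_map4 \<Lambda> \<and> completely_positive4 \<Lambda> \<and> trace_preserving4 \<Lambda>
     \<and> (\<forall>\<rho>. separable \<rho> \<longrightarrow> separable (\<Lambda> \<rho>))"

definition Phi1 :: "complex mat" where
  "Phi1 = outer 4 (vec 4 (\<lambda>i. if i = 0 \<or> i = 3 then complex_of_real (1 / sqrt 2) else 0))"

definition Phi2 :: "complex mat" where
  "Phi2 = outer 4 (vec 4 (\<lambda>i. if i = 0 then complex_of_real (1 / sqrt 2)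
                         else if i = 3 then - complex_of_real (1 / sqrt 2) else 0))"

definition ket01 :: "complex mat" where
  "ket01 = outer 4 (unit_vec 4 1)"

end

theory Submission
  imports Defs
begin

(* Write E = Lambda Phi1 and D = Lambda |01><01|.  Every separable state X satisfies
   2 |X_03| <= X_11 + X_22, the 2x2 minor condition of its partial transpose in AM-GM form.
   As sigma vanishes at the diagonal positions 1 and 2 and Lambda is positive, so do E and D;
   hence D_03 = 0 and sigma_03 = lambda E_03.  Now apply Lambda to the separable states
   2r(1-r) Phi1 + (1-r)^2 |01><01| + r^2 |10><10|: in the (separable) image the entries
   (1,1) and (2,2) come from Lambda |10><10| alone and add up to at most r^2, while the entry
   (0,3) has modulus at least 2r(1-r) |E_03| - r^2/2.  Letting r -> 0 forces E_03 = 0,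
   contradicting sigma_03 = lambda - 1/2 /= 0. *)

lemma kron22_index: "r < 4 \<Longrightarrow> c < 4 \<Longrightarrow>
  kron22 A B $$ (r,c) = A $$ (r div 2, c div 2) * B $$ (r mod 2, c mod 2)"
  by (simp add: kron22_def)

lemma outer_index: "i < n \<Longrightarrow> j < n \<Longrightarrow> outer n v $$ (i,j) = v $ i * cnj (v $ j)"
  by (simp add: outer_def)

lemma outer_carrier [simp]: "outer n v \<in> carrier_mat n n"
  by (simp add: outer_def)

definition ket10 :: "complex mat" where
  "ket10 = outer 4 (unit_vec 4 2)"

lemma Phi1_index: "i < 4 \<Longrightarrow> j < 4 \<Longrightarrow>
    Phi1 $$ (i,j) = (if (i = 0 \<or> i = 3) \<and> (j = 0 \<or> j = 3) then 1/2 else 0)"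
  by (auto simp: Phi1_def outer_index simp flip: of_real_mult)

lemma Phi2_index: "i < 4 \<Longrightarrow> j < 4 \<Longrightarrow> Phi2 $$ (i,j) =
    (if (i = 0 \<or> i = 3) \<and> (j = 0 \<or> j = 3) then if i = j then 1/2 else -1/2 else 0)"
  by (auto simp: Phi2_def outer_index simp del: of_real_divide simp flip: of_real_mult)
    (simp_all add: of_real_divide)

lemma ket01_index: "i < 4 \<Longrightarrow> j < 4 \<Longrightarrow> ket01 $$ (i,j) = (if i = 1 \<and> j = 1 then 1 else 0)"
  by (auto simp: ket01_def outer_index)

lemma ket10_index: "i < 4 \<Longrightarrow> j < 4 \<Longrightarrow> ket10 $$ (i,j) = (if i = 2 \<and> j = 2 then 1 else 0)"
  by (auto simp: ket10_def outer_index)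

lemma dim_Phi1 [simp]: "dim_row Phi1 = 4" "dim_col Phi1 = 4"
  and dim_Phi2 [simp]: "dim_row Phi2 = 4" "dim_col Phi2 = 4"
  and dim_ket01 [simp]: "dim_row ket01 = 4" "dim_col ket01 = 4"
  and dim_ket10 [simp]: "dim_row ket10 = 4" "dim_col ket10 = 4"
  by (simp_all add: Phi1_def Phi2_def ket01_def ket10_def outer_def)

lemma Phi1_carrier [simp]: "Phi1 \<in> carrier_mat 4 4"
  and ket01_carrier [simp]: "ket01 \<in> carrier_mat 4 4"
  and ket10_carrier [simp]: "ket10 \<in> carrier_mat 4 4"
  by (simp_all add: carrier_matI)

lemma mtrace_ket10: "mtrace ket10 = 1"
  by (simp add: mtrace_def ket10_def outer_def numeral_eq_Suc)

lemma linear_map4_carrier: "linear_map4 \<Lambda> \<Longrightarrow> A \<in> carrier_mat 4 4 \<Longrightarrow> \<Lambda> A \<in> carrier_mat 4 4"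
  by (simp add: linear_map4_def)

lemma linear_map4_index_combination2:
  assumes "linear_map4 \<Lambda>" "A \<in> carrier_mat 4 4" "B \<in> carrier_mat 4 4" "i < 4" "j < 4"
  shows "\<Lambda> (a \<cdot>\<^sub>m A + b \<cdot>\<^sub>m B) $$ (i,j) = a * \<Lambda> A $$ (i,j) + b * \<Lambda> B $$ (i,j)"
proof -
  have "\<Lambda> (a \<cdot>\<^sub>m A + b \<cdot>\<^sub>m B) = a \<cdot>\<^sub>m \<Lambda> A + b \<cdot>\<^sub>m \<Lambda> B"
    using assms(1-3) unfolding linear_map4_def by simp
  moreover have "\<Lambda> A \<in> carrier_mat 4 4" "\<Lambda> B \<in> carrier_mat 4 4"
    using assms(1-3) by (simp_all add: linear_map4_carrier)
  ultimately show ?thesis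
    using assms(4,5) by auto
qed

lemma linear_map4_index_combination3:
  assumes "linear_map4 \<Lambda>" "A \<in> carrier_mat 4 4" "B \<in> carrier_mat 4 4" "C \<in> carrier_mat 4 4"
    and "i < 4" "j < 4"
  shows "\<Lambda> (a \<cdot>\<^sub>m A + b \<cdot>\<^sub>m B + c \<cdot>\<^sub>m C) $$ (i,j)
    = a * \<Lambda> A $$ (i,j) + b * \<Lambda> B $$ (i,j) + c * \<Lambda> C $$ (i,j)"
proof -
  have "\<Lambda> (a \<cdot>\<^sub>m A + b \<cdot>\<^sub>m B + c \<cdot>\<^sub>m C) = a \<cdot>\<^sub>m \<Lambda> A + b \<cdot>\<^sub>m \<Lambda> B + c \<cdot>\<^sub>m \<Lambda> C"
    using assms(1-4) unfolding linear_map4_def by (simp add: add_carrier_mat)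
  moreover have "\<Lambda> A \<in> carrier_mat 4 4" "\<Lambda> B \<in> carrier_mat 4 4" "\<Lambda> C \<in> carrier_mat 4 4"
    using assms(1-4) by (simp_all add: linear_map4_carrier)
  ultimately show ?thesis
    using assms(5,6) by auto
qed

lemma sum_mult_unit_vec:
  fixes f :: "nat \<Rightarrow> 'a :: semiring_1"
  assumes "k < n"
  shows "(\<Sum>j<n. f j * unit_vec n k $ j) = f k"
proof -
  have "(\<Sum>j<n. f j * unit_vec n k $ j) = (\<Sum>j<n. if j = k then f j else 0)"
    using assms by (intro sum.cong) auto
  then show ?thesis
    using assms by simp
qed

lemma psd_diag_nonneg:
  assumes "psd n A" "k < n"
  shows "0 \<le> Re (A $$ (k,k))"
proof -
  have "\<forall>v\<in>carrier_vec n. 0 \<le> Re (\<Sum>i<n. \<Sum>j<n. cnj (v $ i) * A $$ (i,j) * v $ j)"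
    using assms(1) unfolding psd_def by blast
  then have "0 \<le> Re (\<Sum>i<n. \<Sum>j<n. cnj (unit_vec n k $ i) * A $$ (i,j) * unit_vec n k $ j)"
    by (rule bspec) simp
  also have "(\<Sum>i<n. \<Sum>j<n. cnj (unit_vec n k $ i) * A $$ (i,j) * unit_vec n k $ j)
      = (\<Sum>i<n. cnj (unit_vec n k $ i) * A $$ (i,k))"
    by (simp only: sum_mult_unit_vec[OF assms(2)])
  also have "\<dots> = (\<Sum>i<n. A $$ (i,k) * unit_vec n k $ i)"
    using assms(2) by (intro sum.cong) auto
  also have "\<dots> = A $$ (k,k)"
    using assms(2) by (rule sum_mult_unit_vec)
  finally show ?thesis .
qed

lemma psd_outer: "psd n (outer n w)"
  unfolding psd_def
proof (intro conjI allI impI ballI)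
  fix i j assume "i < n" "j < n"
  then show "outer n w $$ (i,j) = cnj (outer n w $$ (j,i))"
    by (simp add: outer_index)
next
  fix v :: "complex vec"
  define z where "z = (\<Sum>i<n. cnj (v $ i) * w $ i)"
  have "(\<Sum>i<n. \<Sum>j<n. cnj (v $ i) * outer n w $$ (i,j) * v $ j) = z * cnj z"
    unfolding z_def cnj_sum sum_product
    by (intro sum.cong) (simp_all add: outer_index mult_ac)
  then show "0 \<le> Re (\<Sum>i<n. \<Sum>j<n. cnj (v $ i) * outer n w $$ (i,j) * v $ j)"
    by (simp flip: complex_norm_square)
qed simp

lemma completely_positive4_psd:
  assumes "completely_positive4 \<Lambda>" "linear_map4 \<Lambda>" "psd 4 A"
  shows "psd 4 (\<Lambda> A)"
proof -
  have "\<forall>X. psd (4*1) X \<longrightarrow> psd (4*1) (ampl 1 \<Lambda> X)"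
    using assms(1) unfolding completely_positive4_def by blast
  then have "psd 4 (ampl 1 \<Lambda> A)"
    using assms(3) by simp
  moreover have "ampl 1 \<Lambda> A = \<Lambda> A"
  proof -
    have A: "A \<in> carrier_mat 4 4"
      using assms(3) by (simp add: psd_def)
    then have "mat 4 4 (($$) A) = A"
      by (intro eq_matI) auto
    moreover have "\<Lambda> A \<in> carrier_mat 4 4"
      using assms(2) A by (rule linear_map4_carrier)
    ultimately show ?thesis
      by (intro eq_matI) (auto simp: ampl_def)
  qed
  ultimately show ?thesis
    by simp
qed

lemma separable_entries:
  assumes "separable X"
  obtains n :: nat and p :: "nat \<Rightarrow> real" and \<phi> \<chi> where "\<forall>i<n. 0 \<le> p i"
    and "\<And>r c. r < 4 \<Longrightarrow> c < 4 \<Longrightarrow> X $$ (r,c) = (\<Sum>i<n. of_real (p i) *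
          (\<phi> i $ (r div 2) * cnj (\<phi> i $ (c div 2)) * (\<chi> i $ (r mod 2) * cnj (\<chi> i $ (c mod 2)))))"
  using assms unfolding separable_def by (auto simp: kron22_index outer_index)

lemma Re_mult_self_cnj:
  "Re (of_real p * (a * cnj a * (b * cnj b))) = p * ((cmod a)\<^sup>2 * (cmod b)\<^sup>2)"
  by (simp only: Re_complex_of_real flip: complex_norm_square of_real_mult)

lemma cmod_mult_cnj_le:
  assumes "0 \<le> p"
  shows "2 * cmod (of_real p * (a * cnj b * (c * cnj d)))
    \<le> Re (of_real p * (a * cnj a * (d * cnj d))) + Re (of_real p * (b * cnj b * (c * cnj c)))"
proof -
  have "2 * cmod (of_real p * (a * cnj b * (c * cnj d))) = p * (2 * (cmod a * cmod d) * (cmod b * cmod c))"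
    using assms by (simp add: norm_mult mult_ac)
  also have "\<dots> \<le> p * ((cmod a * cmod d)\<^sup>2 + (cmod b * cmod c)\<^sup>2)"
    using assms by (intro mult_left_mono sum_squares_bound)
  also have "\<dots> = Re (of_real p * (a * cnj a * (d * cnj d))) + Re (of_real p * (b * cnj b * (c * cnj c)))"
    unfolding Re_mult_self_cnj by (simp add: power_mult_distrib algebra_simps)
  finally show ?thesis .
qed

lemma separable_diag_nonneg:
  assumes "separable X" "k < 4"
  shows "0 \<le> Re (X $$ (k,k))"
proof -
  obtain n :: nat and p \<phi> \<chi> where p: "\<forall>i<n. 0 \<le> p i" and X: "\<And>r c. r < 4 \<Longrightarrow> c < 4 \<Longrightarrow>
      X $$ (r,c) = (\<Sum>i<n. of_real (p i) *
          (\<phi> i $ (r div 2) * cnj (\<phi> i $ (c div 2)) * (\<chi> i $ (r mod 2) * cnj (\<chi> i $ (c mod 2)))))"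
    using separable_entries[OF assms(1)] by blast
  have "Re (X $$ (k,k)) = (\<Sum>i<n. p i * ((cmod (\<phi> i $ (k div 2)))\<^sup>2 * (cmod (\<chi> i $ (k mod 2)))\<^sup>2))"
    unfolding X[OF assms(2) assms(2)] Re_sum Re_mult_self_cnj ..
  then show ?thesis
    using p by (auto intro!: sum_nonneg)
qed

lemma separable_corner_le:
  assumes "separable X"
  shows "2 * cmod (X $$ (0,3)) \<le> Re (X $$ (1,1)) + Re (X $$ (2,2))"
proof -
  obtain n :: nat and p \<phi> \<chi> where p: "\<forall>i<n. 0 \<le> p i" and X: "\<And>r c. r < 4 \<Longrightarrow> c < 4 \<Longrightarrow>
      X $$ (r,c) = (\<Sum>i<n. of_real (p i) *
          (\<phi> i $ (r div 2) * cnj (\<phi> i $ (c div 2)) * (\<chi> i $ (r mod 2) * cnj (\<chi> i $ (c mod 2)))))"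
    using separable_entries[OF assms(1)] by blast
  have "2 * cmod (X $$ (0,3)) \<le> (\<Sum>i<n. 2 * cmod (of_real (p i) *
      (\<phi> i $ 0 * cnj (\<phi> i $ 1) * (\<chi> i $ 0 * cnj (\<chi> i $ 1)))))"
    by (simp add: X norm_sum flip: sum_distrib_left)
  also have "\<dots> \<le> (\<Sum>i<n. Re (of_real (p i) * (\<phi> i $ 0 * cnj (\<phi> i $ 0) * (\<chi> i $ 1 * cnj (\<chi> i $ 1))))
      + Re (of_real (p i) * (\<phi> i $ 1 * cnj (\<phi> i $ 1) * (\<chi> i $ 0 * cnj (\<chi> i $ 0)))))"
    using p by (intro sum_mono cmod_mult_cnj_le) auto
  also have "\<dots> = Re (X $$ (1,1)) + Re (X $$ (2,2))"
    by (simp add: X Re_sum sum.distrib)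
  finally show ?thesis .
qed

lemma separable_corner_eq_0:
  assumes "separable X" "Re (X $$ (1,1)) = 0" "Re (X $$ (2,2)) = 0"
  shows "X $$ (0,3) = 0"
  using separable_corner_le[OF assms(1)] assms(2,3) by simp

lemma separable_carrier: "separable X \<Longrightarrow> X \<in> carrier_mat 4 4"
  unfolding separable_def by auto

lemma separable_inner_diag_le_trace:
  assumes "separable X"
  shows "Re (X $$ (1,1)) + Re (X $$ (2,2)) \<le> Re (mtrace X)"
proof -
  have "Re (mtrace X) = Re (X $$ (0,0)) + Re (X $$ (1,1)) + Re (X $$ (2,2)) + Re (X $$ (3,3))"
    using separable_carrier[OF assms] by (simp add: mtrace_def numeral_eq_Suc)
  moreover have "0 \<le> Re (X $$ (0,0))" "0 \<le> Re (X $$ (3,3))"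
    using separable_diag_nonneg[OF assms] by auto
  ultimately show ?thesis by linarith
qed

lemma less_4_cases: "(i::nat) < 4 \<Longrightarrow> i = 0 \<or> i = 1 \<or> i = 2 \<or> i = 3"
  by auto

lemma sum_4: "(\<Sum>k<4. f k) = f 0 + f 1 + f 2 + f (3::nat)"
  by (simp add: numeral_eq_Suc)

lemma power_i: "\<i> ^ 2 = -1" "\<i> ^ 3 = -\<i>" "(-\<i>) ^ 2 = -1" "(-\<i>) ^ 3 = \<i>"
  by (simp_all add: numeral_eq_Suc)

lemma power4_eq_mult: "(x::real) ^ 4 = x * (x * (x * x))"
  by (simp add: numeral_eq_Suc)

(* The average over k < 4 of the product states (p, i^k q) (x) (q, (-i)^k p): the phases
   cancel every coherence except the one between |00> and |11>. *)
lemma separable_Phi1_ket01_ket10_sq: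
  fixes p q :: real
  assumes "p\<^sup>2 + q\<^sup>2 = 1"
  shows "separable (of_real (2 * p\<^sup>2 * q\<^sup>2) \<cdot>\<^sub>m Phi1 + of_real (p ^ 4) \<cdot>\<^sub>m ket01
    + of_real (q ^ 4) \<cdot>\<^sub>m ket10)"
proof -
  define \<phi> where "\<phi> k = vec 2 (\<lambda>j. if j = 0 then of_real p else of_real q * \<i> ^ k)" for k :: nat
  define \<chi> where "\<chi> k = vec 2 (\<lambda>j. if j = 0 then of_real q else of_real p * (- \<i>) ^ k)" for k :: nat
  define M where "M = mat 4 4 (\<lambda>(r,c). \<Sum>k<4. of_real (1/4) * kron22 (outer 2 (\<phi> k)) (outer 2 (\<chi> k)) $$ (r,c))"
  have unit: "unit_vec2 (\<phi> k) \<and> unit_vec2 (\<chi> k)" for k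
    using assms by (simp add: unit_vec2_def \<phi>_def \<chi>_def norm_mult norm_power numeral_eq_Suc add.commute)
  have "of_real (2 * p\<^sup>2 * q\<^sup>2) \<cdot>\<^sub>m Phi1 + of_real (p ^ 4) \<cdot>\<^sub>m ket01 + of_real (q ^ 4) \<cdot>\<^sub>m ket10 = M"
  proof (rule eq_matI)
    fix i j assume "i < dim_row M" "j < dim_col M"
    then have "i < 4" "j < 4"
      by (simp_all add: M_def)
    then show "(of_real (2 * p\<^sup>2 * q\<^sup>2) \<cdot>\<^sub>m Phi1 + of_real (p ^ 4) \<cdot>\<^sub>m ket01 + of_real (q ^ 4) \<cdot>\<^sub>m ket10) $$ (i,j)
      = M $$ (i,j)"
      using less_4_cases[of i] less_4_cases[of j]
      by (simp add: M_def Phi1_index ket01_index ket10_index kron22_index sum_4)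
        (elim disjE; simp add: outer_index \<phi>_def \<chi>_def power_i algebra_simps
          flip: of_real_mult of_real_power; simp add: power2_eq_square power4_eq_mult)
  qed (simp_all add: M_def)
  then show ?thesis
    unfolding separable_def M_def using unit
    by (intro exI[of _ 4] exI[of _ "\<lambda>_. 1/4"] exI[of _ \<phi>] exI[of _ \<chi>]) simp
qed

lemma separable_Phi1_ket01_ket10:
  fixes r :: real
  assumes "0 \<le> r" "r \<le> 1"
  shows "separable (of_real (2 * r * (1 - r)) \<cdot>\<^sub>m Phi1 + of_real ((1 - r)\<^sup>2) \<cdot>\<^sub>m ket01
    + of_real (r\<^sup>2) \<cdot>\<^sub>m ket10)"
proof -
  have p: "(sqrt (1 - r))\<^sup>2 = 1 - r" and q: "(sqrt r)\<^sup>2 = r"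
    using assms by simp_all
  then have "(sqrt (1 - r)) ^ 4 = (1 - r)\<^sup>2" "(sqrt r) ^ 4 = r\<^sup>2"
    by (metis power_mult numeral_Bit0_eq_double mult_2)+
  with separable_Phi1_ket01_ket10_sq[of "sqrt (1 - r)" "sqrt r"] show ?thesis
    by (simp add: p q mult_ac)
qed

lemma separable_ket01: "separable ket01"
proof -
  have "0 \<cdot>\<^sub>m Phi1 + 1 \<cdot>\<^sub>m ket01 + 0 \<cdot>\<^sub>m ket10 = ket01"
    by (rule eq_matI) auto
  then show ?thesis
    using separable_Phi1_ket01_ket10[of 0] by simp
qed

lemma separable_ket10: "separable ket10"
proof -
  have "0 \<cdot>\<^sub>m Phi1 + 0 \<cdot>\<^sub>m ket01 + 1 \<cdot>\<^sub>m ket10 = ket10"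
    by (rule eq_matI) auto
  then show ?thesis
    using separable_Phi1_ket01_ket10[of 1] by simp
qed

lemma non_entangling_Phi1_corner_le:
  assumes ne: "non_entangling \<Lambda>"
    and E: "Re (\<Lambda> Phi1 $$ (1,1)) = 0" "Re (\<Lambda> Phi1 $$ (2,2)) = 0"
    and D: "Re (\<Lambda> ket01 $$ (1,1)) = 0" "Re (\<Lambda> ket01 $$ (2,2)) = 0"
    and r: "0 < r" "r \<le> 1"
  shows "2 * (1 - r) * cmod (\<Lambda> Phi1 $$ (0,3)) \<le> r"
proof -
  have lin: "linear_map4 \<Lambda>" and tp: "trace_preserving4 \<Lambda>"
    and sep: "\<And>\<rho>. separable \<rho> \<Longrightarrow> separable (\<Lambda> \<rho>)"
    using ne by (auto simp: non_entangling_def)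
  define F where "F = \<Lambda> ket10"
  have F_sep: "separable F"
    unfolding F_def by (rule sep[OF separable_ket10])
  have "mtrace F = 1"
    using tp by (simp add: F_def trace_preserving4_def mtrace_ket10)
  then have F_diag: "Re (F $$ (1,1)) + Re (F $$ (2,2)) \<le> 1"
    using separable_inner_diag_le_trace[OF F_sep] by simp
  have F_corner: "2 * cmod (F $$ (0,3)) \<le> 1"
    using separable_corner_le[OF F_sep] F_diag by linarith
  define X where "X = \<Lambda> (of_real (2 * r * (1 - r)) \<cdot>\<^sub>m Phi1 + of_real ((1 - r)\<^sup>2) \<cdot>\<^sub>m ket01
    + of_real (r\<^sup>2) \<cdot>\<^sub>m ket10)"
  have X_sep: "separable X"
    unfolding X_def using r by (intro sep separable_Phi1_ket01_ket10) auto
  have X_entry: "X $$ (i,j) = of_real (2 * r * (1 - r)) * \<Lambda> Phi1 $$ (i,j)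
      + of_real ((1 - r)\<^sup>2) * \<Lambda> ket01 $$ (i,j) + of_real (r\<^sup>2) * F $$ (i,j)"
    if "i < 4" "j < 4" for i j
    unfolding X_def F_def using lin that by (simp add: linear_map4_index_combination3)
  have "\<Lambda> ket01 $$ (0,3) = 0"
    using separable_corner_eq_0[OF sep[OF separable_ket01] D] .
  then have "X $$ (0,3) = of_real (2 * r * (1 - r)) * \<Lambda> Phi1 $$ (0,3) + of_real (r\<^sup>2) * F $$ (0,3)"
    by (simp add: X_entry)
  then have "cmod (of_real (2 * r * (1 - r)) * \<Lambda> Phi1 $$ (0,3)) - cmod (of_real (r\<^sup>2) * F $$ (0,3))
      \<le> cmod (X $$ (0,3))"
    by (metis norm_diff_ineq)
  then have "2 * r * (1 - r) * cmod (\<Lambda> Phi1 $$ (0,3)) - r\<^sup>2 * cmod (F $$ (0,3)) \<le> cmod (X $$ (0,3))"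
    unfolding norm_mult norm_of_real using r by simp
  moreover have "2 * cmod (X $$ (0,3)) \<le> r\<^sup>2 * (Re (F $$ (1,1)) + Re (F $$ (2,2)))"
    using separable_corner_le[OF X_sep] E D by (simp add: X_entry algebra_simps)
  ultimately have "4 * r * (1 - r) * cmod (\<Lambda> Phi1 $$ (0,3)) \<le> r\<^sup>2 * (2 * cmod (F $$ (0,3))) + r\<^sup>2"
    using mult_left_mono[OF F_diag, of "r\<^sup>2"] by (simp add: algebra_simps)
  also have "\<dots> \<le> 2 * r\<^sup>2"
    using mult_left_mono[OF F_corner, of "r\<^sup>2"] by simp
  finally have "(2 * r) * (2 * (1 - r) * cmod (\<Lambda> Phi1 $$ (0,3))) \<le> (2 * r) * r"
    by (simp add: power2_eq_square algebra_simps)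
  then show ?thesis
    using r(1) by simp
qed

lemma non_entangling_Phi1_corner_eq_0:
  assumes "non_entangling \<Lambda>"
    and "Re (\<Lambda> Phi1 $$ (1,1)) = 0" "Re (\<Lambda> Phi1 $$ (2,2)) = 0"
    and "Re (\<Lambda> ket01 $$ (1,1)) = 0" "Re (\<Lambda> ket01 $$ (2,2)) = 0"
  shows "\<Lambda> Phi1 $$ (0,3) = 0"
proof (rule ccontr)
  assume "\<Lambda> Phi1 $$ (0,3) \<noteq> 0"
  then obtain r where r: "0 < r" "r < cmod (\<Lambda> Phi1 $$ (0,3))" "r < 1/2"
    using field_lbound_gt_zero[of "cmod (\<Lambda> Phi1 $$ (0,3))" "1/2"] by auto
  then have "r < 1 * cmod (\<Lambda> Phi1 $$ (0,3))"
    by simp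
  also have "\<dots> < 2 * (1 - r) * cmod (\<Lambda> Phi1 $$ (0,3))"
    using r by (intro mult_strict_right_mono) auto
  moreover have "2 * (1 - r) * cmod (\<Lambda> Phi1 $$ (0,3)) \<le> r"
    using non_entangling_Phi1_corner_le[OF assms] r by simp
  ultimately show False
    by simp
qed

lemma non_entangling_mixture_diag_eq_0:
  assumes ne: "non_entangling \<Lambda>" and lam: "0 < lam" "lam < 1" and k: "k < 4"
    and diag: "Re (\<Lambda> (of_real lam \<cdot>\<^sub>m Phi1 + of_real (1 - lam) \<cdot>\<^sub>m ket01) $$ (k,k)) = 0"
  shows "Re (\<Lambda> Phi1 $$ (k,k)) = 0 \<and> Re (\<Lambda> ket01 $$ (k,k)) = 0"
proof -
  have lin: "linear_map4 \<Lambda>" and cp: "completely_positive4 \<Lambda>"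
    and sep: "separable (\<Lambda> ket01)"
    using ne separable_ket01 by (auto simp: non_entangling_def)
  have "psd 4 (\<Lambda> Phi1)"
    using completely_positive4_psd[OF cp lin psd_outer] by (simp add: Phi1_def)
  then have "0 \<le> lam * Re (\<Lambda> Phi1 $$ (k,k))"
    using psd_diag_nonneg k lam by simp
  moreover have "0 \<le> (1 - lam) * Re (\<Lambda> ket01 $$ (k,k))"
    using separable_diag_nonneg[OF sep k] lam by simp
  moreover have "lam * Re (\<Lambda> Phi1 $$ (k,k)) + (1 - lam) * Re (\<Lambda> ket01 $$ (k,k)) = 0"
    using diag lin k by (simp add: linear_map4_index_combination2)
  ultimately show ?thesis
    using lam by (simp add: add_nonneg_eq_0_iff)
qed

theorem theorem4:
  fixes lam :: real
  assumes "1/2 < lam" and "lam < 1"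
  shows "\<not> (\<exists>\<Lambda>. non_entangling \<Lambda> \<and>
           \<Lambda> (complex_of_real lam \<cdot>\<^sub>m Phi1 + complex_of_real (1 - lam) \<cdot>\<^sub>m ket01)
             = complex_of_real lam \<cdot>\<^sub>m Phi1 + complex_of_real (1 - lam) \<cdot>\<^sub>m Phi2)"
proof
  let ?\<rho> = "complex_of_real lam \<cdot>\<^sub>m Phi1 + complex_of_real (1 - lam) \<cdot>\<^sub>m ket01"
  let ?\<sigma> = "complex_of_real lam \<cdot>\<^sub>m Phi1 + complex_of_real (1 - lam) \<cdot>\<^sub>m Phi2"
  assume "\<exists>\<Lambda>. non_entangling \<Lambda> \<and> \<Lambda> ?\<rho> = ?\<sigma>"
  then obtain \<Lambda> where ne: "non_entangling \<Lambda>" and image: "\<Lambda> ?\<rho> = ?\<sigma>"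
    by blast
  have lin: "linear_map4 \<Lambda>" and sep: "separable (\<Lambda> ket01)"
    using ne separable_ket01 by (auto simp: non_entangling_def)
  have "Re (\<Lambda> Phi1 $$ (k,k)) = 0 \<and> Re (\<Lambda> ket01 $$ (k,k)) = 0" if "k = 1 \<or> k = 2" for k
    using non_entangling_mixture_diag_eq_0[OF ne, of lam k] image that assms
    by (auto simp: Phi1_index Phi2_index)
  then have "\<Lambda> Phi1 $$ (0,3) = 0" and "\<Lambda> ket01 $$ (0,3) = 0"
    using non_entangling_Phi1_corner_eq_0[OF ne] separable_corner_eq_0[OF sep] by auto
  then have "Re (\<Lambda> ?\<rho> $$ (0,3)) = 0"
    using lin by (simp add: linear_map4_index_combination2)
  then show False
    using image assms by (simp add: Phi1_index Phi2_index)
qed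

end
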